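(* For every compact subset $K\subset\partial^2\Gamma$ there exists a constant $C$ with the following property. Suppose $\xi,\eta,\eta'\in\partial\Gamma$ and $g\in\Gamma$ satisfy $(\xi,\eta)\in K$, $(\xi,\eta')\in K$, $(g\xi,g\eta)\in K$, and $\sigma(g,\xi)<0$. Put $t=-\sigma(g,\xi)>0$. Then $\sigma(g,\eta)\in[t-C,t+C]$, $\sigma(g,\eta')\in[t-C,t+C]$, and $d_{\partial\Gamma}(g\eta,g\eta')<\alpha^{t-C}$.
   Context: $\Gamma$ is a countable non-elementary group acting properly and cocompactly by isometries on a proper, Gromov-hyperbolic, quasi-convex metric space $(M,d_M)$ (quasi-convex: any two distinct points of $M\sqcup\partial M$ are joined by a $C_0$-almost-geodesic for a uniform $C_0$). $o\in M$ is a fixed base point. $\partial\Gamma=\partial M$ is the Gromov boundary and $\partial^2\Gamma=\{(\xi,\eta):\xi\ne\eta\}$, with its natural topology. Gromov product. $(x|y)_z=\tfrac12(d_M(x,z)+d_M(y,z)-d_M(x,y))$, extended to boundary points by $(\xi|\eta)_o=\inf\liminf_i(x_i|y_i)_o$ over sequences $x_i\to\xi$, $y_i\to\eta$. Visual metric. $d_{\partial\Gamma}$ is a fixed visual metric on $\partial\Gamma$ of the form $d_{\partial\Gamma}(\xi,\eta)=\alpha^{(\xi|\eta)_o+b(\xi,\eta)}$, where $\alpha\in(0,1)$ is a fixed parameter and $b$ is uniformly bounded. Busemann cocycle. $\sigma(g,\xi)=\limsup_{x\to\xi}(d_M(g^{-1}o,x)-d_M(o,x))$. *)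

theory Defs
  imports "HOL-Analysis.Analysis" "HOL-Algebra.Group_Action"
begin

definition gprod :: "'m::metric_space \<Rightarrow> 'm \<Rightarrow> 'm \<Rightarrow> real" where
  "gprod z x y = (dist x z + dist y z - dist x y) / 2"

definition proper_space :: "'m::metric_space itself \<Rightarrow> bool" where
  "proper_space _ \<longleftrightarrow> (\<forall>(x::'m) r. compact (cball x r))"

definition gromov_hyperbolic :: "'m::metric_space itself \<Rightarrow> bool" where
  "gromov_hyperbolic _ \<longleftrightarrow> (\<exists>\<delta>::real. \<forall>x y z w::'m.
      gprod w x z \<ge> min (gprod w x y) (gprod w y z) - \<delta>)"

definition gromov_seq :: "'m::metric_space \<Rightarrow> (nat \<Rightarrow> 'm) \<Rightarrow> bool" where
  "gromov_seq bp x \<longleftrightarrow> (\<forall>B. \<exists>N. \<forall>i\<ge>N. \<forall>j\<ge>N. gprod bp (x i) (x j) \<ge> B)"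

definition gromov_equiv :: "'m::metric_space \<Rightarrow> (nat \<Rightarrow> 'm) \<Rightarrow> (nat \<Rightarrow> 'm) \<Rightarrow> bool" where
  "gromov_equiv bp x y \<longleftrightarrow> (\<forall>B. \<exists>N. \<forall>i\<ge>N. gprod bp (x i) (y i) \<ge> B)"

text \<open>A boundary point is the class of all sequences converging to it; in particular
  a sequence x converges to the boundary point xi iff x belongs to xi.\<close>
definition gboundary :: "'m::metric_space \<Rightarrow> (nat \<Rightarrow> 'm) set set" where
  "gboundary bp = {{y. gromov_seq bp y \<and> gromov_equiv bp x y} | x. gromov_seq bp x}"

definition gprod_bd :: "'m::metric_space \<Rightarrow> (nat \<Rightarrow> 'm) set \<Rightarrow> (nat \<Rightarrow> 'm) set \<Rightarrow> ereal" where
  "gprod_bd bp \<xi> \<eta> = Inf {liminf (\<lambda>i. ereal (gprod bp (x i) (y i))) | x y. x \<in> \<xi> \<and> y \<in> \<eta>}"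

definition almost_geodesic_on :: "real \<Rightarrow> real set \<Rightarrow> (real \<Rightarrow> 'm::metric_space) \<Rightarrow> bool" where
  "almost_geodesic_on C I c \<longleftrightarrow> (\<forall>s\<in>I. \<forall>t\<in>I.
      \<bar>s - t\<bar> - C \<le> dist (c s) (c t) \<and> dist (c s) (c t) \<le> \<bar>s - t\<bar> + C)"

definition ends_at_top :: "(real \<Rightarrow> 'm::metric_space) \<Rightarrow> (nat \<Rightarrow> 'm) set \<Rightarrow> bool" where
  "ends_at_top c \<xi> \<longleftrightarrow> (\<forall>s. filterlim s at_top sequentially \<longrightarrow> (c \<circ> s) \<in> \<xi>)"

definition ends_at_bot :: "(real \<Rightarrow> 'm::metric_space) \<Rightarrow> (nat \<Rightarrow> 'm) set \<Rightarrow> bool" where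
  "ends_at_bot c \<xi> \<longleftrightarrow> (\<forall>s. filterlim s at_bot sequentially \<longrightarrow> (c \<circ> s) \<in> \<xi>)"

definition quasi_convex :: "'m::metric_space \<Rightarrow> bool" where
  "quasi_convex bp \<longleftrightarrow> (\<exists>C0::real.
     (\<forall>x y::'m. x \<noteq> y \<longrightarrow> (\<exists>c a b. a \<le> b \<and> almost_geodesic_on C0 {a..b} c \<and> c a = x \<and> c b = y)) \<and>
     (\<forall>x::'m. \<forall>\<xi>\<in>gboundary bp. \<exists>c a. almost_geodesic_on C0 {a..} c \<and> c a = x \<and> ends_at_top c \<xi>) \<and>
     (\<forall>\<xi>\<in>gboundary bp. \<forall>\<eta>\<in>gboundary bp. \<xi> \<noteq> \<eta> \<longrightarrow>
        (\<exists>c. almost_geodesic_on C0 UNIV c \<and> ends_at_bot c \<xi> \<and> ends_at_top c \<eta>)))"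

definition isometric_action :: "('g, 'b) monoid_scheme \<Rightarrow> ('g \<Rightarrow> 'm::metric_space \<Rightarrow> 'm) \<Rightarrow> bool" where
  "isometric_action G \<phi> \<longleftrightarrow> group_action G UNIV \<phi> \<and>
     (\<forall>g\<in>carrier G. \<forall>x y. dist (\<phi> g x) (\<phi> g y) = dist x y)"

definition properly_acting :: "('g, 'b) monoid_scheme \<Rightarrow> ('g \<Rightarrow> 'm::metric_space \<Rightarrow> 'm) \<Rightarrow> bool" where
  "properly_acting G \<phi> \<longleftrightarrow> (\<forall>K. compact K \<longrightarrow> finite {g\<in>carrier G. \<phi> g ` K \<inter> K \<noteq> {}})"

definition cocompact_action :: "('g, 'b) monoid_scheme \<Rightarrow> ('g \<Rightarrow> 'm::metric_space \<Rightarrow> 'm) \<Rightarrow> bool" where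
  "cocompact_action G \<phi> \<longleftrightarrow> (\<exists>K. compact K \<and> (\<Union>g\<in>carrier G. \<phi> g ` K) = UNIV)"

definition bd_act :: "('g \<Rightarrow> 'm \<Rightarrow> 'm) \<Rightarrow> 'g \<Rightarrow> (nat \<Rightarrow> 'm) set \<Rightarrow> (nat \<Rightarrow> 'm) set" where
  "bd_act \<phi> g \<xi> = (\<lambda>x. \<phi> g \<circ> x) ` \<xi>"

text \<open>Busemann cocycle sigma(g,xi) = limsup_{x\<rightarrow>xi} (d(g^-1 bp, x) - d(bp, x)),
  the limsup computed as the sup over sequences converging to xi (it is finite,
  bounded by d(bp, g^-1 bp)).\<close>
definition busemann :: "('g, 'b) monoid_scheme \<Rightarrow> ('g \<Rightarrow> 'm::metric_space \<Rightarrow> 'm) \<Rightarrow> 'm \<Rightarrow> 'g \<Rightarrow> (nat \<Rightarrow> 'm) set \<Rightarrow> real" where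
  "busemann G \<phi> bp g \<xi> = real_of_ereal (Sup {limsup (\<lambda>i. ereal (dist (\<phi> (inv\<^bsub>G\<^esub> g) bp) (x i) - dist bp (x i))) | x. x \<in> \<xi>})"

definition visual_metric :: "'m::metric_space \<Rightarrow> real \<Rightarrow> ((nat \<Rightarrow> 'm) set \<Rightarrow> (nat \<Rightarrow> 'm) set \<Rightarrow> real) \<Rightarrow> bool" where
  "visual_metric bp \<alpha> dB \<longleftrightarrow> 0 < \<alpha> \<and> \<alpha> < 1 \<and> Metric_space (gboundary bp) dB \<and>
     (\<exists>b B. (\<forall>\<xi>\<in>gboundary bp. \<forall>\<eta>\<in>gboundary bp. \<bar>b \<xi> \<eta>\<bar> \<le> B) \<and>
        (\<forall>\<xi>\<in>gboundary bp. \<forall>\<eta>\<in>gboundary bp. \<xi> \<noteq> \<eta> \<longrightarrow>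
           dB \<xi> \<eta> = \<alpha> powr (real_of_ereal (gprod_bd bp \<xi> \<eta>) + b \<xi> \<eta>)))"

end

theory Submission
  imports Defs
begin

(*
  Put p = g\<^sup>-\<^sup>1 o.  Then sigma(g, zeta) is the Busemann function of zeta at p, the limsup
  of d(p, z_i) - d(o, z_i) = d(o, p) - 2 (p|z_i)_o along sequences z_i converging to zeta, and g
  carries Gromov products based at p to Gromov products based at o.

  Since K is compact and avoids the diagonal, the visual metric is bounded below on K, so along
  representatives of any pair in K the Gromov products (x_i|y_i)_o are eventually bounded by a
  uniform R.  If sigma(g, xi) = -t < 0, then (p|x_i)_o is about (d(o, p) + t)/2 for x_i -> xi;
  once d(o, p) is large this exceeds R + delta, and hyperbolicity forces (p|y_i)_o <= R + delta
  for every eta with (xi, eta) in K, i.e. d(p, y_i) - d(o, y_i) >= d(o, p) - O(1).  The same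
  argument at the base point p, fed with (g xi, g eta) in K, bounds d(o, p) by t + O(1).  Hence
  sigma(g, eta) and sigma(g, eta') are t + O(1), and
  (g y_i | g y'_i)_o = (y_i|y'_i)_p >= t - O(1), which gives d(g eta, g eta') <= alpha^(t - O(1)).
*)

lemma frequently_less_of_liminf_less:
  assumes "liminf (\<lambda>i. ereal (f i)) < ereal c"
  shows "\<exists>\<^sub>F i in sequentially. f i < c"
proof (rule ccontr)
  assume "\<not> ?thesis"
  then have "\<forall>\<^sub>F i in sequentially. ereal c \<le> ereal (f i)"
    by (simp add: not_frequently not_less)
  then show False
    using Liminf_bounded assms by (metis not_le)
qed

lemma frequently_greater_of_less_limsup:
  assumes "ereal c < limsup (\<lambda>i. ereal (f i))"
  shows "\<exists>\<^sub>F i in sequentially. c < f i"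
proof (rule ccontr)
  assume "\<not> ?thesis"
  then have "\<forall>\<^sub>F i in sequentially. ereal (f i) \<le> ereal c"
    by (simp add: not_frequently not_less)
  then show False
    using Limsup_bounded assms by (metis not_le)
qed

lemma liminf_le_of_frequently_less:
  assumes "\<exists>\<^sub>F i in sequentially. f i < c"
  shows "liminf (\<lambda>i. ereal (f i)) \<le> ereal c"
proof (rule ccontr)
  assume "\<not> ?thesis"
  then have "\<forall>\<^sub>F i in sequentially. ereal c < ereal (f i)"
    by (intro less_LiminfD) (simp add: not_le)
  then have "\<forall>\<^sub>F i in sequentially. c < f i"
    by simp
  with assms have "\<exists>\<^sub>F i in sequentially. c < f i \<and> f i < c"
    by (rule frequently_eventually_conj)
  then show False
    by (simp add: frequently_def)
qed

lemma gprod_commute: "gprod w x y = gprod w y x"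
  unfolding gprod_def by (simp add: dist_commute field_simps)

lemma gprod_nonneg: "0 \<le> gprod w x y"
  using dist_triangle3[of x y w] unfolding gprod_def by (simp add: dist_commute)

lemma gprod_same: "gprod w x x = dist x w"
  unfolding gprod_def by simp

lemma gprod_change_base:
  "2 * gprod p x y = 2 * gprod w x y + (dist p x - dist w x) + (dist p y - dist w y)"
  unfolding gprod_def by (simp add: dist_commute field_simps)

lemma abs_gprod_change_base_le: "\<bar>gprod q x y - gprod w x y\<bar> \<le> dist w q"
  using gprod_change_base[of q x y w] abs_dist_diff_le[of q x w] abs_dist_diff_le[of q y w]
  by (simp add: dist_commute)

lemma dist_diff_eq_gprod: "dist p z - dist w z = dist w p - 2 * gprod w p z"
  unfolding gprod_def by (simp add: dist_commute field_simps)

lemma gprod_isometry: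
  assumes "\<forall>u v. dist (\<psi> u) (\<psi> v) = dist u v"
  shows "gprod (\<psi> w) (\<psi> x) (\<psi> y) = gprod w x y"
  using assms by (simp add: gprod_def)

lemma dist_diff_base_bounds: "- dist w p \<le> dist p z - dist w z \<and> dist p z - dist w z \<le> dist w p"
  using abs_dist_diff_le[of p z w] by (simp add: dist_commute abs_le_iff)

section \<open>The Gromov boundary\<close>

lemma gromov_equiv_eventually:
  "gromov_equiv bp x y \<longleftrightarrow> (\<forall>B. \<forall>\<^sub>F i in sequentially. B \<le> gprod bp (x i) (y i))"
  unfolding gromov_equiv_def eventually_sequentially ..

lemma gromov_seq_eventually:
  "gromov_seq bp x \<longleftrightarrow>
     (\<forall>B. \<forall>\<^sub>F (i, j) in sequentially \<times>\<^sub>F sequentially. B \<le> gprod bp (x i) (x j))"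
  unfolding gromov_seq_def eventually_prod_sequentially by (auto simp: gprod_commute)

lemma gromov_equiv_refl: "gromov_seq bp x \<Longrightarrow> gromov_equiv bp x x"
  unfolding gromov_seq_def gromov_equiv_def by blast

lemma gromov_equiv_sym: "gromov_equiv bp x y \<Longrightarrow> gromov_equiv bp y x"
  unfolding gromov_equiv_def by (simp add: gprod_commute)

lemma gromov_seq_change_base: "gromov_seq q x \<longleftrightarrow> gromov_seq w x"
proof -
  have "gromov_seq w x" if "gromov_seq q x" for q w
    unfolding gromov_seq_eventually
  proof
    fix B
    have "\<forall>\<^sub>F (i, j) in sequentially \<times>\<^sub>F sequentially. B + dist w q \<le> gprod q (x i) (x j)"
      using \<open>gromov_seq q x\<close> unfolding gromov_seq_eventually by blast
    then show "\<forall>\<^sub>F (i, j) in sequentially \<times>\<^sub>F sequentially. B \<le> gprod w (x i) (x j)"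
    proof (rule eventually_mono, clarify)
      fix i j assume "B + dist w q \<le> gprod q (x i) (x j)"
      then show "B \<le> gprod w (x i) (x j)"
        using abs_gprod_change_base_le[of q "x i" "x j" w] by linarith
    qed
  qed
  then show ?thesis by blast
qed

lemma gromov_equiv_change_base: "gromov_equiv q x y \<longleftrightarrow> gromov_equiv w x y"
proof -
  have "gromov_equiv w x y" if "gromov_equiv q x y" for q w
    unfolding gromov_equiv_eventually
  proof
    fix B
    have "\<forall>\<^sub>F i in sequentially. B + dist w q \<le> gprod q (x i) (y i)"
      using \<open>gromov_equiv q x y\<close> unfolding gromov_equiv_eventually by blast
    then show "\<forall>\<^sub>F i in sequentially. B \<le> gprod w (x i) (y i)"
    proof eventually_elim
      case (elim i)
      then show ?case
        using abs_gprod_change_base_le[of q "x i" "y i" w] by linarith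
    qed
  qed
  then show ?thesis by blast
qed

lemma gromov_seq_isometry:
  assumes "\<forall>u v. dist (\<psi> u) (\<psi> v) = dist u v"
  shows "gromov_seq bp (\<psi> \<circ> x) \<longleftrightarrow> gromov_seq bp x"
  using gromov_seq_change_base[of bp "\<psi> \<circ> x" "\<psi> bp"] gromov_seq_change_base[of bp x]
  unfolding gromov_seq_def by (simp add: gprod_isometry[OF assms])

lemma gromov_equiv_isometry:
  assumes "\<forall>u v. dist (\<psi> u) (\<psi> v) = dist u v"
  shows "gromov_equiv bp (\<psi> \<circ> x) (\<psi> \<circ> y) \<longleftrightarrow> gromov_equiv bp x y"
  using gromov_equiv_change_base[of bp "\<psi> \<circ> x" "\<psi> \<circ> y" "\<psi> bp"]
    gromov_equiv_change_base[of bp x y]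
  unfolding gromov_equiv_def by (simp add: gprod_isometry[OF assms])

definition gclass :: "'m::metric_space \<Rightarrow> (nat \<Rightarrow> 'm) \<Rightarrow> (nat \<Rightarrow> 'm) set" where
  "gclass bp x = {y. gromov_seq bp y \<and> gromov_equiv bp x y}"

lemma gboundary_gclass: "gboundary bp = {gclass bp x | x. gromov_seq bp x}"
  unfolding gboundary_def gclass_def ..

lemma gboundary_nonempty: "a \<in> gboundary bp \<Longrightarrow> a \<noteq> {}"
  unfolding gboundary_gclass gclass_def using gromov_equiv_refl by blast

lemma gclass_isometry:
  assumes iso: "\<forall>u v. dist (\<psi> u) (\<psi> v) = dist u v" and "surj \<psi>"
  shows "(\<lambda>y. \<psi> \<circ> y) ` gclass bp x = gclass bp (\<psi> \<circ> x)"
proof (intro equalityI subsetI)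
  fix y assume y: "y \<in> gclass bp (\<psi> \<circ> x)"
  obtain \<psi>' where "\<psi> \<circ> \<psi>' = id"
    using \<open>surj \<psi>\<close> by (auto simp: surj_iff)
  then have y_eq: "y = \<psi> \<circ> (\<psi>' \<circ> y)"
    by (simp flip: comp_assoc)
  then have "\<psi>' \<circ> y \<in> gclass bp x"
    using y unfolding gclass_def
    by (metis (mono_tags) gromov_seq_isometry[OF iso] gromov_equiv_isometry[OF iso] mem_Collect_eq)
  with y_eq show "y \<in> (\<lambda>y. \<psi> \<circ> y) ` gclass bp x"
    by blast
qed (auto simp: gclass_def gromov_seq_isometry[OF iso] gromov_equiv_isometry[OF iso])

lemma gboundary_isometry:
  assumes "\<forall>u v. dist (\<psi> u) (\<psi> v) = dist u v" and "surj \<psi>" and "a \<in> gboundary bp"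
  shows "(\<lambda>y. \<psi> \<circ> y) ` a \<in> gboundary bp"
proof -
  obtain x where "gromov_seq bp x" "a = gclass bp x"
    using assms(3) unfolding gboundary_gclass by blast
  then have "(\<lambda>y. \<psi> \<circ> y) ` a = gclass bp (\<psi> \<circ> x)" "gromov_seq bp (\<psi> \<circ> x)"
    using gclass_isometry[OF assms(1,2)] gromov_seq_isometry[OF assms(1)] by auto
  then show ?thesis
    unfolding gboundary_gclass by blast
qed

lemma gprod_bd_ge:
  assumes "\<forall>x\<in>a. \<forall>y\<in>b. \<forall>\<^sub>F i in sequentially. L \<le> gprod bp (x i) (y i)"
  shows "ereal L \<le> gprod_bd bp a b"
  unfolding gprod_bd_def using assms by (force intro!: Inf_greatest Liminf_bounded)

lemma gprod_bd_less_frequently: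
  assumes "gprod_bd bp a b < ereal M"
  obtains x y where "x \<in> a" "y \<in> b" "\<exists>\<^sub>F i in sequentially. gprod bp (x i) (y i) < M"
proof -
  obtain x y where "x \<in> a" "y \<in> b" "liminf (\<lambda>i. ereal (gprod bp (x i) (y i))) < ereal M"
    using assms unfolding gprod_bd_def Inf_less_iff by blast
  then show ?thesis
    using that frequently_less_of_liminf_less[of "\<lambda>i. gprod bp (x i) (y i)"] by blast
qed

(* Only the four-point condition at the base point is needed. *)
locale hyperbolic_at =
  fixes bp :: "'m::metric_space" and \<delta> :: real
  assumes gprod_hyperbolic: "min (gprod bp x y) (gprod bp y z) - \<delta> \<le> gprod bp x z"
begin

lemma delta_nonneg: "0 \<le> \<delta>"
  using gprod_hyperbolic[of bp bp bp] by (simp add: gprod_same)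

lemma gprod_ge_chain: "L \<le> gprod bp x y \<Longrightarrow> L \<le> gprod bp y z \<Longrightarrow> L - \<delta> \<le> gprod bp x z"
  using gprod_hyperbolic[of x y z] by linarith

lemma gromov_equiv_trans:
  assumes "gromov_equiv bp x y" and "gromov_equiv bp y z"
  shows "gromov_equiv bp x z"
  unfolding gromov_equiv_eventually
proof
  fix B
  have "\<forall>\<^sub>F i in sequentially. B + \<delta> \<le> gprod bp (x i) (y i) \<and> B + \<delta> \<le> gprod bp (y i) (z i)"
    using assms unfolding gromov_equiv_eventually by (intro eventually_conj) blast+
  then show "\<forall>\<^sub>F i in sequentially. B \<le> gprod bp (x i) (z i)"
    by eventually_elim (use gprod_ge_chain in force)
qed

lemma gboundary_eq_gclass: "a \<in> gboundary bp \<Longrightarrow> x \<in> a \<Longrightarrow> a = gclass bp x"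
  unfolding gboundary_gclass gclass_def
  using gromov_equiv_sym gromov_equiv_trans by blast

lemma gboundary_mem_equiv:
  "a \<in> gboundary bp \<Longrightarrow> x \<in> a \<Longrightarrow> y \<in> a \<Longrightarrow> gromov_equiv bp x y"
  using gboundary_eq_gclass unfolding gclass_def by blast

lemma gboundary_eqI:
  assumes "a \<in> gboundary bp" "b \<in> gboundary bp" "x \<in> a" "y \<in> b" "gromov_equiv bp x y"
  shows "a = b"
  using assms gboundary_eq_gclass[of a x] gboundary_eq_gclass[of b y]
  unfolding gclass_def by (blast intro: gromov_equiv_trans gromov_equiv_sym)

lemma gboundary_gprod_eventually_ge:
  assumes "a \<in> gboundary bp" "x \<in> a" "y \<in> a"
  shows "\<forall>\<^sub>F (i, j) in sequentially \<times>\<^sub>F sequentially. B \<le> gprod bp (x i) (y j)"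
proof -
  have "\<forall>\<^sub>F (i, j) in sequentially \<times>\<^sub>F sequentially. B + \<delta> \<le> gprod bp (x i) (y i)"
    using gboundary_mem_equiv[OF assms] unfolding gromov_equiv_eventually
    by (simp add: eventually_prod1)
  moreover have "\<forall>\<^sub>F (i, j) in sequentially \<times>\<^sub>F sequentially. B + \<delta> \<le> gprod bp (y i) (y j)"
    using gboundary_eq_gclass[OF assms(1,3)] assms(3)
    unfolding gclass_def gromov_seq_eventually by blast
  ultimately show ?thesis
    by eventually_elim (use gprod_ge_chain in force)
qed

lemma gprod_eventually_le_of_frequently_less:
  assumes a: "a \<in> gboundary bp" "x \<in> a" "x' \<in> a"
    and b: "b \<in> gboundary bp" "y \<in> b" "y' \<in> b"
    and small: "\<exists>\<^sub>F i in sequentially. gprod bp (x i) (y i) < M"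
  shows "\<forall>\<^sub>F j in sequentially. gprod bp (x' j) (y' j) \<le> M + 2 * \<delta>"
proof -
  have "\<forall>\<^sub>F (i, j) in sequentially \<times>\<^sub>F sequentially.
          M + 2 * \<delta> \<le> gprod bp (x i) (x' j) \<and> M + 2 * \<delta> \<le> gprod bp (y i) (y' j)"
    by (rule eventually_mono[OF eventually_conj[OF
          gboundary_gprod_eventually_ge[OF a, where B = "M + 2 * \<delta>"]
          gboundary_gprod_eventually_ge[OF b, where B = "M + 2 * \<delta>"]]]) auto
  then obtain N where N: "\<And>i j. N \<le> i \<Longrightarrow> N \<le> j \<Longrightarrow>
      M + 2 * \<delta> \<le> gprod bp (x i) (x' j) \<and> M + 2 * \<delta> \<le> gprod bp (y' j) (y i)"
    unfolding eventually_prod_sequentially by (auto simp: gprod_commute)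
  have "gprod bp (x' j) (y' j) \<le> M + 2 * \<delta>" if "N \<le> j" for j
  proof (rule ccontr)
    assume big: "\<not> ?thesis"
    obtain i where "N \<le> i" "gprod bp (x i) (y i) < M"
      using small unfolding frequently_sequentially by blast
    moreover have "M + \<delta> \<le> gprod bp (x' j) (y i)"
      using gprod_ge_chain[of "M + 2 * \<delta>" "x' j" "y' j" "y i"] N[OF \<open>N \<le> i\<close> \<open>N \<le> j\<close>]
        big by linarith
    ultimately show False
      using gprod_ge_chain[of "M + \<delta>" "x i" "x' j" "y i"] N[OF \<open>N \<le> i\<close> \<open>N \<le> j\<close>] delta_nonneg
      by linarith
  qed
  then show ?thesis
    unfolding eventually_sequentially by blast
qed

lemma gprod_bd_finite:
  assumes "a \<in> gboundary bp" "b \<in> gboundary bp" "a \<noteq> b"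
  shows "gprod_bd bp a b \<noteq> \<infinity>"
proof -
  obtain x y where "x \<in> a" "y \<in> b"
    using gboundary_nonempty assms by blast
  then have "\<not> gromov_equiv bp x y"
    using gboundary_eqI assms by blast
  then obtain B where "\<not> (\<forall>\<^sub>F i in sequentially. B \<le> gprod bp (x i) (y i))"
    unfolding gromov_equiv_eventually by blast
  then have "\<exists>\<^sub>F i in sequentially. gprod bp (x i) (y i) < B"
    by (simp add: not_eventually not_le)
  then have "liminf (\<lambda>i. ereal (gprod bp (x i) (y i))) \<le> ereal B"
    by (rule liminf_le_of_frequently_less)
  moreover have "gprod_bd bp a b \<le> liminf (\<lambda>i. ereal (gprod bp (x i) (y i)))"
    unfolding gprod_bd_def by (rule Inf_lower) (use \<open>x \<in> a\<close> \<open>y \<in> b\<close> in blast)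
  ultimately show ?thesis
    by auto
qed

lemma gprod_bd_less_eventually_le:
  assumes "a \<in> gboundary bp" "b \<in> gboundary bp" "gprod_bd bp a b < ereal M" "x \<in> a" "y \<in> b"
  shows "\<forall>\<^sub>F i in sequentially. gprod bp (x i) (y i) \<le> M + 2 * \<delta>"
proof -
  obtain x0 y0 where "x0 \<in> a" "y0 \<in> b" "\<exists>\<^sub>F i in sequentially. gprod bp (x0 i) (y0 i) < M"
    using gprod_bd_less_frequently[OF assms(3)] .
  then show ?thesis
    using gprod_eventually_le_of_frequently_less assms by blast
qed

end

section \<open>Busemann functions\<close>

(* busemann_fun bp xi p is beta_xi(p, bp); the cocycle of the paper is
   sigma(g, xi) = busemann_fun bp xi (g\<^sup>-\<^sup>1 bp). *)
definition busemann_fun :: "'m::metric_space \<Rightarrow> (nat \<Rightarrow> 'm) set \<Rightarrow> 'm \<Rightarrow> real" where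
  "busemann_fun bp \<xi> p =
     real_of_ereal (SUP x\<in>\<xi>. limsup (\<lambda>i. ereal (dist p (x i) - dist bp (x i))))"

lemma SUP_limsup_in_interval:
  assumes "A \<noteq> {}" and "\<forall>x\<in>A. \<forall>\<^sub>F i in sequentially. L \<le> f x i \<and> f x i \<le> U"
  shows "(SUP x\<in>A. limsup (\<lambda>i. ereal (f x i))) \<in> {ereal L..ereal U}"
proof -
  have bounds: "ereal L \<le> limsup (\<lambda>i. ereal (f x i)) \<and> limsup (\<lambda>i. ereal (f x i)) \<le> ereal U"
    if "x \<in> A" for x
  proof -
    have ev: "\<forall>\<^sub>F i in sequentially. L \<le> f x i \<and> f x i \<le> U"
      using assms(2) that by blast
    show ?thesis
    proof
      show "ereal L \<le> limsup (\<lambda>i. ereal (f x i))"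
        by (rule le_Limsup) (simp, rule eventually_mono[OF ev], simp)
      show "limsup (\<lambda>i. ereal (f x i)) \<le> ereal U"
        by (rule Limsup_bounded) (rule eventually_mono[OF ev], simp)
    qed
  qed
  obtain x where "x \<in> A"
    using assms(1) by blast
  then have "ereal L \<le> (SUP x\<in>A. limsup (\<lambda>i. ereal (f x i)))"
    using bounds by (meson SUP_upper2)
  moreover have "(SUP x\<in>A. limsup (\<lambda>i. ereal (f x i))) \<le> ereal U"
    using bounds by (meson SUP_least)
  ultimately show ?thesis
    by simp
qed

lemma busemann_fun_SUP:
  assumes "\<xi> \<noteq> {}"
  shows "ereal (busemann_fun bp \<xi> p) = (SUP x\<in>\<xi>. limsup (\<lambda>i. ereal (dist p (x i) - dist bp (x i))))"
proof -
  have "(SUP x\<in>\<xi>. limsup (\<lambda>i. ereal (dist p (x i) - dist bp (x i))))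
          \<in> {ereal (- dist bp p)..ereal (dist bp p)}"
    by (rule SUP_limsup_in_interval[OF assms]) (simp add: dist_diff_base_bounds)
  then show ?thesis
    unfolding busemann_fun_def
    by (cases "SUP x\<in>\<xi>. limsup (\<lambda>i. ereal (dist p (x i) - dist bp (x i)))") auto
qed

lemma busemann_fun_in_interval:
  assumes "\<xi> \<noteq> {}"
    and "\<forall>x\<in>\<xi>. \<forall>\<^sub>F i in sequentially.
           L \<le> dist p (x i) - dist bp (x i) \<and> dist p (x i) - dist bp (x i) \<le> U"
  shows "busemann_fun bp \<xi> p \<in> {L..U}"
  using SUP_limsup_in_interval[OF assms] unfolding busemann_fun_SUP[OF assms(1), symmetric] by simp

lemma abs_busemann_fun_le: "\<bar>busemann_fun bp \<xi> p\<bar> \<le> dist bp p"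
proof (cases "\<xi> = {}")
  case True
  then show ?thesis
    by (simp add: busemann_fun_def bot_ereal_def)
next
  case False
  have "busemann_fun bp \<xi> p \<in> {- dist bp p..dist bp p}"
    by (rule busemann_fun_in_interval[OF False]) (simp add: dist_diff_base_bounds)
  then show ?thesis
    by (simp add: abs_le_iff)
qed

lemma busemann_fun_eventually_less:
  assumes "x \<in> \<xi>" and "0 < \<epsilon>"
  shows "\<forall>\<^sub>F i in sequentially. dist p (x i) - dist bp (x i) < busemann_fun bp \<xi> p + \<epsilon>"
proof -
  have "limsup (\<lambda>i. ereal (dist p (x i) - dist bp (x i))) \<le> ereal (busemann_fun bp \<xi> p)"
  proof -
    have "\<xi> \<noteq> {}"
      using assms(1) by blast
    show ?thesis
      unfolding busemann_fun_SUP[OF \<open>\<xi> \<noteq> {}\<close>] using assms(1) by (rule SUP_upper)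
  qed
  also have "\<dots> < ereal (busemann_fun bp \<xi> p + \<epsilon>)"
    using assms(2) by simp
  finally have "\<forall>\<^sub>F i in sequentially. ereal (dist p (x i) - dist bp (x i)) < ereal (busemann_fun bp \<xi> p + \<epsilon>)"
    by (rule Limsup_lessD)
  then show ?thesis
    by simp
qed

lemma busemann_fun_frequently_greater:
  assumes "\<xi> \<noteq> {}" and "0 < \<epsilon>"
  obtains x where "x \<in> \<xi>"
    "\<exists>\<^sub>F i in sequentially. busemann_fun bp \<xi> p - \<epsilon> < dist p (x i) - dist bp (x i)"
proof -
  have "ereal (busemann_fun bp \<xi> p - \<epsilon>)
          < (SUP x\<in>\<xi>. limsup (\<lambda>i. ereal (dist p (x i) - dist bp (x i))))"
    unfolding busemann_fun_SUP[OF assms(1), symmetric] using assms(2) by simp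
  then obtain x where "x \<in> \<xi>"
      "ereal (busemann_fun bp \<xi> p - \<epsilon>) < limsup (\<lambda>i. ereal (dist p (x i) - dist bp (x i)))"
    unfolding less_SUP_iff by blast
  then show ?thesis
    using that frequently_greater_of_less_limsup[of _ "\<lambda>i. dist p (x i) - dist bp (x i)"] by blast
qed

context hyperbolic_at
begin

(* The last hypothesis makes (p|x_i) exceed R + delta eventually, so hyperbolicity gives
   (p|y_i) <= R + delta. *)
lemma busemann_fun_shadow:
  assumes "x \<in> \<xi>" and "\<forall>\<^sub>F i in sequentially. gprod bp (x i) (y i) \<le> R"
    and "busemann_fun bp \<xi> p + 2 * R + 2 * \<delta> + 1 \<le> dist bp p"
  shows "\<forall>\<^sub>F i in sequentially. dist bp p - 2 * R - 2 * \<delta> \<le> dist p (y i) - dist bp (y i)"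
  using busemann_fun_eventually_less[OF assms(1) zero_less_one, where p = p and bp = bp] assms(2)
proof eventually_elim
  case (elim i)
  have "R + \<delta> < gprod bp p (x i)"
    using elim(1) assms(3) dist_diff_eq_gprod[of p "x i" bp] by linarith
  then have "gprod bp p (y i) \<le> R + \<delta>"
    using gprod_hyperbolic[of "x i" p "y i"] gprod_commute[of bp "x i" p] elim(2) by linarith
  then show ?case
    using dist_diff_eq_gprod[of p "y i" bp] by linarith
qed

(* Compare 2 (x_i|y_i)_p = 2 (x_i|y_i)_bp + F x_i + F y_i <= 2 R, where F z = d(p, z) - d(bp, z),
   along indices where F x_i is close to the Busemann value. *)
lemma dist_le_busemann_fun:
  assumes "\<xi> \<noteq> {}" and "0 \<le> R"
    and "\<forall>x\<in>\<xi>. \<forall>\<^sub>F i in sequentially. gprod bp (x i) (y i) \<le> R"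
    and "\<forall>x\<in>\<xi>. \<forall>\<^sub>F i in sequentially. gprod p (x i) (y i) \<le> R"
  shows "dist bp p \<le> \<bar>busemann_fun bp \<xi> p\<bar> + 4 * R + 2 * \<delta> + 1"
proof (cases "busemann_fun bp \<xi> p + 2 * R + 2 * \<delta> + 1 \<le> dist bp p")
  case False
  then show ?thesis
    using assms(2) delta_nonneg by linarith
next
  case True
  obtain x where "x \<in> \<xi>" and far: "\<exists>\<^sub>F i in sequentially.
      busemann_fun bp \<xi> p - 1 < dist p (x i) - dist bp (x i)"
    using busemann_fun_frequently_greater[OF assms(1), of 1] by auto
  have "\<forall>\<^sub>F i in sequentially. dist bp p - 2 * R - 2 * \<delta> \<le> dist p (y i) - dist bp (y i)
                              \<and> gprod p (x i) (y i) \<le> R"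
    using busemann_fun_shadow[OF \<open>x \<in> \<xi>\<close> _ True] assms(3,4) \<open>x \<in> \<xi>\<close>
    by (intro eventually_conj) auto
  with far have "\<exists>\<^sub>F i in sequentially. busemann_fun bp \<xi> p - 1 < dist p (x i) - dist bp (x i)
      \<and> dist bp p - 2 * R - 2 * \<delta> \<le> dist p (y i) - dist bp (y i) \<and> gprod p (x i) (y i) \<le> R"
    by (rule frequently_eventually_frequently)
  then have "\<exists>\<^sub>F i in sequentially. dist bp p \<le> - busemann_fun bp \<xi> p + 4 * R + 2 * \<delta> + 1"
  proof (rule frequently_elim1)
    fix i
    assume "busemann_fun bp \<xi> p - 1 < dist p (x i) - dist bp (x i)
      \<and> dist bp p - 2 * R - 2 * \<delta> \<le> dist p (y i) - dist bp (y i) \<and> gprod p (x i) (y i) \<le> R"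
    then show "dist bp p \<le> - busemann_fun bp \<xi> p + 4 * R + 2 * \<delta> + 1"
      using gprod_change_base[of p "x i" "y i" bp] gprod_nonneg[of bp "x i" "y i"] by linarith
  qed
  then show ?thesis
    by simp
qed

lemma busemann_fun_uniform:
  assumes "\<xi> \<noteq> {}" and "busemann_fun bp \<xi> p \<le> 0" and "0 \<le> R"
    and "\<forall>x\<in>\<xi>. \<forall>\<^sub>F i in sequentially. gprod bp (x i) (y i) \<le> R"
    and "\<forall>x\<in>\<xi>. \<forall>\<^sub>F i in sequentially. gprod p (x i) (y i) \<le> R"
    and z: "\<forall>x\<in>\<xi>. \<forall>\<^sub>F i in sequentially. gprod bp (x i) (z i) \<le> R"
  shows "\<forall>\<^sub>F i in sequentially.
           \<bar>dist p (z i) - dist bp (z i) + busemann_fun bp \<xi> p\<bar> \<le> 4 * R + 2 * \<delta> + 1"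
proof -
  let ?s = "busemann_fun bp \<xi> p" and ?F = "\<lambda>i. dist p (z i) - dist bp (z i)"
  have upper: "?F i + ?s \<le> 4 * R + 2 * \<delta> + 1" for i
    using dist_le_busemann_fun[OF assms(1,3,4,5)] assms(2) dist_diff_base_bounds[of bp p "z i"]
    by linarith
  have "\<forall>\<^sub>F i in sequentially. - (2 * R + 2 * \<delta> + 1) \<le> ?F i + ?s"
  proof (cases "?s + 2 * R + 2 * \<delta> + 1 \<le> dist bp p")
    case True
    obtain x where "x \<in> \<xi>"
      using assms(1) by blast
    then have "\<forall>\<^sub>F i in sequentially. dist bp p - 2 * R - 2 * \<delta> \<le> ?F i"
      using busemann_fun_shadow[OF \<open>x \<in> \<xi>\<close> _ True] z by blast
    then show ?thesis
      by eventually_elim (use abs_busemann_fun_le[of bp \<xi> p] in linarith)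
  next
    case False
    show ?thesis
    proof (intro always_eventually allI)
      fix i
      show "- (2 * R + 2 * \<delta> + 1) \<le> ?F i + ?s"
        using False dist_diff_base_bounds[of bp p "z i"] by linarith
    qed
  qed
  then show ?thesis
  proof eventually_elim
    case (elim i)
    then show ?case
      using upper[of i] assms(3) delta_nonneg by (simp add: abs_le_iff)
  qed
qed

end

lemma gprod_bd_isometry_image_ge:
  assumes iso: "\<forall>u v. dist (\<psi> u) (\<psi> v) = dist u v" and "\<psi> p = bp"
    and "\<forall>y\<in>\<eta>. \<forall>\<^sub>F i in sequentially. L \<le> dist p (y i) - dist bp (y i)"
    and "\<forall>y\<in>\<eta>'. \<forall>\<^sub>F i in sequentially. L \<le> dist p (y i) - dist bp (y i)"
  shows "ereal L \<le> gprod_bd bp ((\<lambda>y. \<psi> \<circ> y) ` \<eta>) ((\<lambda>y. \<psi> \<circ> y) ` \<eta>')"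
proof (rule gprod_bd_ge, safe)
  fix y y' assume "y \<in> \<eta>" "y' \<in> \<eta>'"
  then have "\<forall>\<^sub>F i in sequentially. L \<le> dist p (y i) - dist bp (y i) \<and> L \<le> dist p (y' i) - dist bp (y' i)"
    using assms(3,4) by (intro eventually_conj) auto
  then show "\<forall>\<^sub>F i in sequentially. L \<le> gprod bp ((\<psi> \<circ> y) i) ((\<psi> \<circ> y') i)"
  proof eventually_elim
    case (elim i)
    have "gprod bp ((\<psi> \<circ> y) i) ((\<psi> \<circ> y') i) = gprod p (y i) (y' i)"
      using gprod_isometry[OF iso, of p "y i" "y' i"] \<open>\<psi> p = bp\<close> by simp
    then show ?case
      using elim gprod_change_base[of p "y i" "y' i" bp] gprod_nonneg[of bp "y i" "y' i"] by linarith
  qed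
qed

lemma isometric_action_dist:
  "isometric_action G \<phi> \<Longrightarrow> g \<in> carrier G \<Longrightarrow> \<forall>u v. dist (\<phi> g u) (\<phi> g v) = dist u v"
  unfolding isometric_action_def by blast

lemma isometric_action_surj: "isometric_action G \<phi> \<Longrightarrow> g \<in> carrier G \<Longrightarrow> surj (\<phi> g)"
  using group_action.surj_prop[of G UNIV \<phi> g] unfolding isometric_action_def by blast

lemma isometric_action_inv_cancel:
  fixes G (structure)
  assumes "isometric_action G \<phi>" and "g \<in> carrier G"
  shows "\<phi> g (\<phi> (inv g) z) = z"
proof -
  interpret group_action G UNIV \<phi>
    using assms(1) unfolding isometric_action_def by blast
  interpret group G
    using group_hom group_hom.axioms(1) by blast
  have "\<phi> g (\<phi> (inv g) z) = \<phi> (g \<otimes> inv g) z"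
    using composition_rule[of z g "inv g"] assms(2) by simp
  also have "\<dots> = z"
    using id_eq_one assms(2) by (metis UNIV_I r_inv restrict_apply')
  finally show ?thesis .
qed

lemma compactin_dist_bounded_below:
  assumes M: "Metric_space S d" and sub: "K \<subseteq> {(a, b). a \<in> S \<and> b \<in> S \<and> a \<noteq> b}"
    and cpt: "compactin (prod_topology (Metric_space.mtopology S d) (Metric_space.mtopology S d)) K"
  obtains \<epsilon> where "0 < \<epsilon>" "\<And>a b. (a, b) \<in> K \<Longrightarrow> \<epsilon> \<le> d a b"
proof (cases "K = {}")
  case True
  then show ?thesis
    using that[of 1] by auto
next
  case False
  have "continuous_map (prod_topology (Metric_space.mtopology S d) (Metric_space.mtopology S d))
          euclidean (\<lambda>(x, y). d x y)"
    using continuous_map_metric[of "metric (S, d)"]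
    by (simp add: Metric_space.mtopology_of[OF M] Metric_space.mdist_metric[OF M])
  then have "compactin euclidean ((\<lambda>(x, y). d x y) ` K)"
    by (rule image_compactin[OF cpt])
  then have "compact ((\<lambda>(x, y). d x y) ` K)"
    by simp
  moreover have "(\<lambda>(x, y). d x y) ` K \<noteq> {}"
    using False by blast
  ultimately obtain m where m: "m \<in> (\<lambda>(x, y). d x y) ` K" "\<forall>t \<in> (\<lambda>(x, y). d x y) ` K. m \<le> t"
    using compact_attains_inf by blast
  then obtain a0 b0 where "(a0, b0) \<in> K" "m = d a0 b0"
    by auto
  then have "a0 \<in> S" "b0 \<in> S" "a0 \<noteq> b0"
    using sub by auto
  then have "0 < m"
    using \<open>m = d a0 b0\<close> Metric_space.zero[OF M] Metric_space.nonneg[OF M] by (metis order_le_less)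
  moreover have "\<And>a b. (a, b) \<in> K \<Longrightarrow> m \<le> d a b"
    using m(2) by force
  ultimately show ?thesis
    using that by blast
qed

(* Of a visual metric only the upper bound in terms of the Gromov product is used. *)
locale visual_boundary = hyperbolic_at bp \<delta> for bp :: "'m::metric_space" and \<delta> +
  fixes \<alpha> :: real and dB :: "(nat \<Rightarrow> 'm) set \<Rightarrow> (nat \<Rightarrow> 'm) set \<Rightarrow> real" and B :: real
  assumes alpha_pos: "0 < \<alpha>" and alpha_less_one: "\<alpha> < 1" and B_nonneg: "0 \<le> B"
    and boundary_metric: "Metric_space (gboundary bp) dB"
    and dist_le_powr_gprod_bd: "a \<in> gboundary bp \<Longrightarrow> b \<in> gboundary bp \<Longrightarrow> a \<noteq> b \<Longrightarrow>
       dB a b \<le> \<alpha> powr (real_of_ereal (gprod_bd bp a b) - B)"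

lemma visual_boundaryI:
  assumes "hyperbolic_at bp \<delta>" and "visual_metric bp \<alpha> dB"
  obtains B where "visual_boundary bp \<delta> \<alpha> dB B"
proof -
  obtain b B0 where \<alpha>: "0 < \<alpha>" "\<alpha> < 1" and M: "Metric_space (gboundary bp) dB"
    and b: "\<forall>a\<in>gboundary bp. \<forall>a'\<in>gboundary bp. \<bar>b a a'\<bar> \<le> B0"
    and dB: "\<forall>a\<in>gboundary bp. \<forall>a'\<in>gboundary bp. a \<noteq> a' \<longrightarrow>
               dB a a' = \<alpha> powr (real_of_ereal (gprod_bd bp a a') + b a a')"
    using assms(2) unfolding visual_metric_def by (elim conjE exE) (rule that, assumption+)
  define B where "B = max B0 0"
  have "dB a a' \<le> \<alpha> powr (real_of_ereal (gprod_bd bp a a') - B)"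
    if "a \<in> gboundary bp" "a' \<in> gboundary bp" "a \<noteq> a'" for a a'
  proof -
    have "real_of_ereal (gprod_bd bp a a') - B \<le> real_of_ereal (gprod_bd bp a a') + b a a'"
      using b that unfolding B_def by (force simp: abs_le_iff)
    then show ?thesis
      using dB that \<alpha> by (simp add: powr_mono')
  qed
  with \<alpha> M assms(1) have "visual_boundary bp \<delta> \<alpha> dB B"
    unfolding B_def
    by (simp add: visual_boundary_def visual_boundary_axioms_def)
  then show ?thesis ..
qed

context visual_boundary
begin

lemma dist_le_of_gprod_bd_ge:
  assumes "a \<in> gboundary bp" "b \<in> gboundary bp" "ereal L \<le> gprod_bd bp a b"
  shows "dB a b \<le> \<alpha> powr (L - B)"
proof (cases "a = b")
  case True
  then show ?thesis
    using Metric_space.zero[OF boundary_metric assms(1,1)] by simp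
next
  case False
  then have "L \<le> real_of_ereal (gprod_bd bp a b)"
    using assms(3) gprod_bd_finite[OF assms(1,2) False] by (cases "gprod_bd bp a b") auto
  then have "\<alpha> powr (real_of_ereal (gprod_bd bp a b) - B) \<le> \<alpha> powr (L - B)"
    using alpha_pos alpha_less_one by (intro powr_mono') auto
  then show ?thesis
    using dist_le_powr_gprod_bd[OF assms(1,2) False] by linarith
qed

lemma compact_gprod_eventually_le:
  assumes sub: "K \<subseteq> {(a, b). a \<in> gboundary bp \<and> b \<in> gboundary bp \<and> a \<noteq> b}"
    and cpt: "compactin (prod_topology (Metric_space.mtopology (gboundary bp) dB)
                                        (Metric_space.mtopology (gboundary bp) dB)) K"
  obtains R where "0 \<le> R"
    "\<And>a b x y. (a, b) \<in> K \<Longrightarrow> x \<in> a \<Longrightarrow> y \<in> b \<Longrightarrow>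
        \<forall>\<^sub>F i in sequentially. gprod bp (x i) (y i) \<le> R"
proof -
  obtain \<epsilon> where "0 < \<epsilon>" and \<epsilon>: "\<And>a b. (a, b) \<in> K \<Longrightarrow> \<epsilon> \<le> dB a b"
    using compactin_dist_bounded_below[OF boundary_metric sub cpt] by blast
  define M where "M = B + ln \<epsilon> / ln \<alpha> + 1"
  have "\<alpha> powr (M - B) < \<alpha> powr (ln \<epsilon> / ln \<alpha>)"
    unfolding M_def using alpha_pos alpha_less_one by (intro powr_less_mono') auto
  also have "\<dots> = \<epsilon>"
    using alpha_pos alpha_less_one \<open>0 < \<epsilon>\<close> by (simp add: powr_def)
  finally have small: "\<alpha> powr (M - B) < \<epsilon>" .
  have "gprod_bd bp a b < ereal M" if "(a, b) \<in> K" for a b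
  proof (rule ccontr)
    assume "\<not> ?thesis"
    then have "dB a b \<le> \<alpha> powr (M - B)"
      using that sub by (intro dist_le_of_gprod_bd_ge) auto
    then show False
      using small \<epsilon>[OF that] by linarith
  qed
  then have "\<forall>\<^sub>F i in sequentially. gprod bp (x i) (y i) \<le> max (M + 2 * \<delta>) 0"
    if "(a, b) \<in> K" "x \<in> a" "y \<in> b" for a b x y
    using gprod_bd_less_eventually_le[of a b M x y] that sub
    by (force elim: eventually_mono)
  then show ?thesis
    using that[of "max (M + 2 * \<delta>) 0"] by simp
qed

lemma busemann_translation_estimates:
  assumes iso: "\<forall>u v. dist (\<psi> u) (\<psi> v) = dist u v" and "surj \<psi>" and "\<psi> p = bp"
    and bd: "\<xi> \<in> gboundary bp" "\<eta> \<in> gboundary bp" "\<eta>' \<in> gboundary bp"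
    and "busemann_fun bp \<xi> p \<le> 0" and "0 \<le> R"
    and \<eta>: "\<forall>x\<in>\<xi>. \<forall>y\<in>\<eta>. \<forall>\<^sub>F i in sequentially. gprod bp (x i) (y i) \<le> R"
    and \<eta>': "\<forall>x\<in>\<xi>. \<forall>y\<in>\<eta>'. \<forall>\<^sub>F i in sequentially. gprod bp (x i) (y i) \<le> R"
    and \<psi>\<eta>: "\<forall>x\<in>\<xi>. \<forall>y\<in>\<eta>. \<forall>\<^sub>F i in sequentially. gprod bp (\<psi> (x i)) (\<psi> (y i)) \<le> R"
  defines "t \<equiv> - busemann_fun bp \<xi> p" and "c \<equiv> 4 * R + 2 * \<delta> + 1"
  shows "busemann_fun bp \<eta> p \<in> {t - c..t + c}" and "busemann_fun bp \<eta>' p \<in> {t - c..t + c}"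
    and "dB ((\<lambda>y. \<psi> \<circ> y) ` \<eta>) ((\<lambda>y. \<psi> \<circ> y) ` \<eta>') \<le> \<alpha> powr (t - c - B)"
proof -
  have "\<xi> \<noteq> {}"
    using gboundary_nonempty bd(1) by blast
  obtain y where "y \<in> \<eta>"
    using gboundary_nonempty bd(2) by blast
  have y_p: "\<forall>x\<in>\<xi>. \<forall>\<^sub>F i in sequentially. gprod p (x i) (y i) \<le> R"
    using \<psi>\<eta> \<open>y \<in> \<eta>\<close> gprod_isometry[OF iso, of p] \<open>\<psi> p = bp\<close> by simp
  have y_bp: "\<forall>x\<in>\<xi>. \<forall>\<^sub>F i in sequentially. gprod bp (x i) (y i) \<le> R"
    using \<eta> \<open>y \<in> \<eta>\<close> by blast
  have close: "\<forall>z\<in>\<zeta>. \<forall>\<^sub>F i in sequentially.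
                  t - c \<le> dist p (z i) - dist bp (z i) \<and> dist p (z i) - dist bp (z i) \<le> t + c"
    if "\<forall>x\<in>\<xi>. \<forall>z\<in>\<zeta>. \<forall>\<^sub>F i in sequentially. gprod bp (x i) (z i) \<le> R" for \<zeta>
  proof
    fix z assume "z \<in> \<zeta>"
    with that have "\<forall>x\<in>\<xi>. \<forall>\<^sub>F i in sequentially. gprod bp (x i) (z i) \<le> R"
      by blast
    then have "\<forall>\<^sub>F i in sequentially.
        \<bar>dist p (z i) - dist bp (z i) + busemann_fun bp \<xi> p\<bar> \<le> c"
      unfolding c_def by (rule busemann_fun_uniform[OF \<open>\<xi> \<noteq> {}\<close> assms(7,8) y_bp y_p])
    then show "\<forall>\<^sub>F i in sequentially.
        t - c \<le> dist p (z i) - dist bp (z i) \<and> dist p (z i) - dist bp (z i) \<le> t + c"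
      unfolding t_def by eventually_elim (simp add: abs_le_iff)
  qed
  show "busemann_fun bp \<eta> p \<in> {t - c..t + c}" "busemann_fun bp \<eta>' p \<in> {t - c..t + c}"
    using busemann_fun_in_interval[OF gboundary_nonempty[OF bd(2)] close[OF \<eta>]]
      busemann_fun_in_interval[OF gboundary_nonempty[OF bd(3)] close[OF \<eta>']] by auto
  have "ereal (t - c) \<le> gprod_bd bp ((\<lambda>y. \<psi> \<circ> y) ` \<eta>) ((\<lambda>y. \<psi> \<circ> y) ` \<eta>')"
    using close[OF \<eta>] close[OF \<eta>']
    by (intro gprod_bd_isometry_image_ge[OF iso \<open>\<psi> p = bp\<close>]) (simp_all add: eventually_conj_iff)
  then show "dB ((\<lambda>y. \<psi> \<circ> y) ` \<eta>) ((\<lambda>y. \<psi> \<circ> y) ` \<eta>') \<le> \<alpha> powr (t - c - B)"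
    using gboundary_isometry[OF iso \<open>surj \<psi>\<close>] bd by (intro dist_le_of_gprod_bd_ge) auto
qed

lemma busemann_action_estimates:
  fixes G (structure)
  assumes act: "isometric_action G \<phi>" and "g \<in> carrier G"
    and bd: "\<xi> \<in> gboundary bp" "\<eta> \<in> gboundary bp" "\<eta>' \<in> gboundary bp"
    and "busemann G \<phi> bp g \<xi> \<le> 0" and "0 \<le> R"
    and "\<forall>x\<in>\<xi>. \<forall>y\<in>\<eta>. \<forall>\<^sub>F i in sequentially. gprod bp (x i) (y i) \<le> R"
    and "\<forall>x\<in>\<xi>. \<forall>y\<in>\<eta>'. \<forall>\<^sub>F i in sequentially. gprod bp (x i) (y i) \<le> R"
    and translated: "\<forall>x\<in>bd_act \<phi> g \<xi>. \<forall>y\<in>bd_act \<phi> g \<eta>.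
                       \<forall>\<^sub>F i in sequentially. gprod bp (x i) (y i) \<le> R"
  defines "t \<equiv> - busemann G \<phi> bp g \<xi>" and "c \<equiv> 4 * R + 2 * \<delta> + 1"
  shows "busemann G \<phi> bp g \<eta> \<in> {t - c..t + c}" and "busemann G \<phi> bp g \<eta>' \<in> {t - c..t + c}"
    and "dB (bd_act \<phi> g \<eta>) (bd_act \<phi> g \<eta>') \<le> \<alpha> powr (t - c - B)"
proof -
  have bus: "busemann G \<phi> bp g \<zeta> = busemann_fun bp \<zeta> (\<phi> (inv g) bp)" for \<zeta>
    by (simp add: busemann_def busemann_fun_def Setcompr_eq_image)
  have "\<forall>x\<in>\<xi>. \<forall>y\<in>\<eta>. \<forall>\<^sub>F i in sequentially. gprod bp (\<phi> g (x i)) (\<phi> g (y i)) \<le> R"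
  proof (intro ballI)
    fix x y assume "x \<in> \<xi>" "y \<in> \<eta>"
    then have "\<phi> g \<circ> x \<in> bd_act \<phi> g \<xi>" "\<phi> g \<circ> y \<in> bd_act \<phi> g \<eta>"
      unfolding bd_act_def by blast+
    then show "\<forall>\<^sub>F i in sequentially. gprod bp (\<phi> g (x i)) (\<phi> g (y i)) \<le> R"
      using translated by fastforce
  qed
  from busemann_translation_estimates[OF isometric_action_dist[OF act \<open>g \<in> carrier G\<close>]
      isometric_action_surj[OF act \<open>g \<in> carrier G\<close>] isometric_action_inv_cancel[OF act \<open>g \<in> carrier G\<close>]
      bd _ \<open>0 \<le> R\<close> assms(8,9) this] assms(6)
  show "busemann G \<phi> bp g \<eta> \<in> {t - c..t + c}" "busemann G \<phi> bp g \<eta>' \<in> {t - c..t + c}"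
    and "dB (bd_act \<phi> g \<eta>) (bd_act \<phi> g \<eta>') \<le> \<alpha> powr (t - c - B)"
    unfolding t_def c_def bus bd_act_def by simp_all
qed

lemma busemann_uniform_estimates:
  fixes G (structure)
  assumes act: "isometric_action G \<phi>"
    and sub: "K \<subseteq> {(\<xi>, \<eta>). \<xi> \<in> gboundary bp \<and> \<eta> \<in> gboundary bp \<and> \<xi> \<noteq> \<eta>}"
    and cpt: "compactin (prod_topology (Metric_space.mtopology (gboundary bp) dB)
                                        (Metric_space.mtopology (gboundary bp) dB)) K"
  shows "\<exists>C. \<forall>\<xi> \<eta> \<eta>' g. g \<in> carrier G \<and> (\<xi>, \<eta>) \<in> K \<and> (\<xi>, \<eta>') \<in> K \<and>
           (bd_act \<phi> g \<xi>, bd_act \<phi> g \<eta>) \<in> K \<and> busemann G \<phi> bp g \<xi> < 0 \<longrightarrow>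
           (let t = - busemann G \<phi> bp g \<xi> in
              busemann G \<phi> bp g \<eta> \<in> {t - C..t + C} \<and> busemann G \<phi> bp g \<eta>' \<in> {t - C..t + C} \<and>
              dB (bd_act \<phi> g \<eta>) (bd_act \<phi> g \<eta>') < \<alpha> powr (t - C))"
proof -
  obtain R where "0 \<le> R" and R: "\<And>a b x y. (a, b) \<in> K \<Longrightarrow> x \<in> a \<Longrightarrow> y \<in> b \<Longrightarrow>
      \<forall>\<^sub>F i in sequentially. gprod bp (x i) (y i) \<le> R"
    using compact_gprod_eventually_le[OF sub cpt] by blast
  define c where "c = 4 * R + 2 * \<delta> + 1"
  have estimate: "busemann G \<phi> bp g \<eta> \<in> {t - (c + B + 1)..t + (c + B + 1)} \<and>
      busemann G \<phi> bp g \<eta>' \<in> {t - (c + B + 1)..t + (c + B + 1)} \<and>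
      dB (bd_act \<phi> g \<eta>) (bd_act \<phi> g \<eta>') < \<alpha> powr (t - (c + B + 1))"
    if "g \<in> carrier G" "(\<xi>, \<eta>) \<in> K" "(\<xi>, \<eta>') \<in> K" "(bd_act \<phi> g \<xi>, bd_act \<phi> g \<eta>) \<in> K"
      and "busemann G \<phi> bp g \<xi> < 0" and t: "t = - busemann G \<phi> bp g \<xi>" for \<xi> \<eta> \<eta>' g t
  proof -
    have "\<xi> \<in> gboundary bp" "\<eta> \<in> gboundary bp" "\<eta>' \<in> gboundary bp"
      using that(2,3) sub by auto
    moreover have "\<forall>x\<in>\<xi>. \<forall>y\<in>\<eta>. \<forall>\<^sub>F i in sequentially. gprod bp (x i) (y i) \<le> R"
      "\<forall>x\<in>\<xi>. \<forall>y\<in>\<eta>'. \<forall>\<^sub>F i in sequentially. gprod bp (x i) (y i) \<le> R"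
      "\<forall>x\<in>bd_act \<phi> g \<xi>. \<forall>y\<in>bd_act \<phi> g \<eta>. \<forall>\<^sub>F i in sequentially. gprod bp (x i) (y i) \<le> R"
      using R[OF that(2)] R[OF that(3)] R[OF that(4)] by blast+
    ultimately have "busemann G \<phi> bp g \<eta> \<in> {t - c..t + c}" "busemann G \<phi> bp g \<eta>' \<in> {t - c..t + c}"
      "dB (bd_act \<phi> g \<eta>) (bd_act \<phi> g \<eta>') \<le> \<alpha> powr (t - c - B)"
      using busemann_action_estimates[OF act that(1) _ _ _ _ \<open>0 \<le> R\<close>] that(5)
      unfolding c_def t by simp_all
    moreover have "\<alpha> powr (t - c - B) < \<alpha> powr (t - (c + B + 1))"
      using alpha_pos alpha_less_one by (intro powr_less_mono') auto
    ultimately show ?thesis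
      using B_nonneg by simp
  qed
  show ?thesis
    unfolding Let_def by (intro exI[of _ "c + B + 1"] allI impI, elim conjE) (rule estimate, simp_all)
qed

end

theorem mainTheorem8:
  fixes G :: "('g, 'z) monoid_scheme" (structure)
    and \<phi> :: "'g \<Rightarrow> 'm::metric_space \<Rightarrow> 'm"
    and bp :: 'm
    and \<alpha> :: real
    and dB :: "(nat \<Rightarrow> 'm) set \<Rightarrow> (nat \<Rightarrow> 'm) set \<Rightarrow> real"
  assumes "group G" and "countable (carrier G)"
    and "proper_space TYPE('m)" and "gromov_hyperbolic TYPE('m)" and "quasi_convex bp"
    and "isometric_action G \<phi>" and "properly_acting G \<phi>" and "cocompact_action G \<phi>"
    and "infinite (gboundary bp)"
    and "visual_metric bp \<alpha> dB"
  shows "\<forall>K. K \<subseteq> {(\<xi>, \<eta>). \<xi> \<in> gboundary bp \<and> \<eta> \<in> gboundary bp \<and> \<xi> \<noteq> \<eta>} \<and>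
          compactin (prod_topology (Metric_space.mtopology (gboundary bp) dB)
                                   (Metric_space.mtopology (gboundary bp) dB)) K \<longrightarrow>
        (\<exists>C::real. \<forall>\<xi> \<eta> \<eta>' g.
           g \<in> carrier G \<and> (\<xi>, \<eta>) \<in> K \<and> (\<xi>, \<eta>') \<in> K \<and>
           (bd_act \<phi> g \<xi>, bd_act \<phi> g \<eta>) \<in> K \<and> busemann G \<phi> bp g \<xi> < 0 \<longrightarrow>
           (let t = - busemann G \<phi> bp g \<xi> in
              busemann G \<phi> bp g \<eta> \<in> {t - C .. t + C} \<and>
              busemann G \<phi> bp g \<eta>' \<in> {t - C .. t + C} \<and>
              dB (bd_act \<phi> g \<eta>) (bd_act \<phi> g \<eta>') < \<alpha> powr (t - C)))"
proof -
  obtain \<delta> where "hyperbolic_at bp \<delta>"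
    using assms(4) unfolding gromov_hyperbolic_def hyperbolic_at_def by blast
  then obtain B where "visual_boundary bp \<delta> \<alpha> dB B"
    using visual_boundaryI assms(10) by blast
  then show ?thesis
    using visual_boundary.busemann_uniform_estimates[OF _ assms(6)] by blast
qed

end
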